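(* Let $t\in[0,1]$. For each $n$ let $\boldsymbol{g}\in\mathbb{R}^n$ be a deterministic vector with $\|\boldsymbol{g}\|_2^2=O(n^{(1-t)/(1+t)})$, and let $b=b_n$ satisfy $b=\Omega(n^{-t/(1+t)})$. Let $\boldsymbol{w}=(w_1,\ldots,w_n)^\top$ have i.i.d. entries from $\mathbb{P}_w\in\mathcal{D}_1\cup\mathcal{D}_2$ (not depending on $n$). Then for any fixed $\delta>0$, $$\lim_{n\to\infty}\mathbb{P}\Bigl(\frac{|\boldsymbol{w}^\top\boldsymbol{g}|}{b\|\boldsymbol{w}\|_2^2}>\delta\Bigr)=0.$$
   Context: For $s>0$, $\mathcal{D}_s$ is the class of distributions of $\xi$ with $\mathbb{E}[\xi]=0$ and $1\le\mathbb{E}[|\xi|^s]\le2$. $a_n=O(c_n)$ means $|a_n|\le C|c_n|$ for a constant $C$; $b=\Omega(c_n)$ means $|c_n|\le C|b|$ for a constant $C>0$. Convention: $a/0=\infty$. *)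

theory Defs
  imports "HOL-Probability.Probability"
begin

definition distr_class :: "real \<Rightarrow> real measure \<Rightarrow> bool" where
  "distr_class s P \<longleftrightarrow>
     prob_space P \<and> sets P = sets borel \<and>
     integrable P (\<lambda>x. x) \<and> (\<integral>x. x \<partial>P) = 0 \<and>
     integrable P (\<lambda>x. \<bar>x\<bar> powr s) \<and>
     1 \<le> (\<integral>x. \<bar>x\<bar> powr s \<partial>P) \<and> (\<integral>x. \<bar>x\<bar> powr s \<partial>P) \<le> 2"

end

theory Submission
  imports Defs
begin

(* Write S_n = sum_i w_i^2 and T_n = sum_i w_i g_i. The hypotheses on g and b combine to
   ||g||^2 <= C n b^2 eventually.
   If sigma^2 = E w^2 is finite, the weak law gives S_n > sigma^2 n / 2 with high probability;
   there a ratio above delta forces |T_n| > delta |b| sigma^2 n / 2, which by Chebyshev has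
   probability O(||g||^2 / (b^2 n^2)) = O(1/n).
   If E w^2 is infinite, truncating w_i^2 shows S_n > m n with high probability for every m,
   while Cauchy-Schwarz T_n^2 <= S_n ||g||^2 bounds the ratio by sqrt (C / m), which is below
   delta once m = C / delta^2. *)

lemma (in prob_space)
  fixes Y :: "'i \<Rightarrow> 'a \<Rightarrow> real"
  assumes "finite I" and indep: "indep_vars (\<lambda>_. borel) Y I"
    and square_integrable: "\<And>i. i \<in> I \<Longrightarrow> integrable M (\<lambda>x. (Y i x)\<^sup>2)"
    and mean_zero: "\<And>i. i \<in> I \<Longrightarrow> expectation (Y i) = 0"
  shows integrable_square_sum_indep_mean_zero:
      "integrable M (\<lambda>x. (\<Sum>i\<in>I. c i * Y i x)\<^sup>2)"
    and expectation_square_sum_indep_mean_zero: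
      "expectation (\<lambda>x. (\<Sum>i\<in>I. c i * Y i x)\<^sup>2) = (\<Sum>i\<in>I. (c i)\<^sup>2 * expectation (\<lambda>x. (Y i x)\<^sup>2))"
proof -
  have integrable: "integrable M (Y i)" if "i \<in> I" for i
  proof (rule square_integrable_imp_integrable)
    show "random_variable borel (Y i)"
      using indep that by (simp add: indep_vars_def)
  qed (rule square_integrable[OF that])
  have products: "integrable M (\<lambda>x. Y i x * Y j x) \<and>
      expectation (\<lambda>x. c i * c j * (Y i x * Y j x)) =
        (if i = j then (c i)\<^sup>2 * expectation (\<lambda>x. (Y i x)\<^sup>2) else 0)"
    if "i \<in> I" "j \<in> I" for i j
  proof (cases "i = j")
    case True
    then show ?thesis
      using square_integrable[OF \<open>i \<in> I\<close>] by (simp add: power2_eq_square)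
  next
    case False
    have pair: "indep_vars (\<lambda>_. borel) Y {i, j}"
      using indep_vars_subset[OF indep] that by auto
    have "integrable M (\<lambda>x. \<Prod>k\<in>{i, j}. Y k x)"
      using that by (intro indep_vars_integrable[OF _ pair]) (auto intro: integrable)
    moreover have "expectation (\<lambda>x. \<Prod>k\<in>{i, j}. Y k x) = (\<Prod>k\<in>{i, j}. expectation (Y k))"
      using that by (intro indep_vars_lebesgue_integral[OF _ pair]) (auto intro: integrable)
    ultimately show ?thesis
      using False mean_zero that by simp
  qed
  have square_expand: "(\<Sum>i\<in>I. c i * Y i x)\<^sup>2 = (\<Sum>i\<in>I. \<Sum>j\<in>I. c i * c j * (Y i x * Y j x))" for x
    by (simp add: power2_eq_square sum_product mult_ac)
  show "integrable M (\<lambda>x. (\<Sum>i\<in>I. c i * Y i x)\<^sup>2)"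
    unfolding square_expand using products
    by (intro Bochner_Integration.integrable_sum integrable_mult_right) blast
  have "expectation (\<lambda>x. (\<Sum>i\<in>I. c i * Y i x)\<^sup>2) =
      (\<Sum>i\<in>I. \<Sum>j\<in>I. expectation (\<lambda>x. c i * c j * (Y i x * Y j x)))"
    unfolding square_expand using products
    by (simp add: Bochner_Integration.integral_sum)
  also have "\<dots> = (\<Sum>i\<in>I. \<Sum>j\<in>I. if i = j then (c i)\<^sup>2 * expectation (\<lambda>x. (Y i x)\<^sup>2) else 0)"
    by (intro sum.cong refl) (use products in blast)
  also have "\<dots> = (\<Sum>i\<in>I. (c i)\<^sup>2 * expectation (\<lambda>x. (Y i x)\<^sup>2))"
    using \<open>finite I\<close> by simp
  finally show "expectation (\<lambda>x. (\<Sum>i\<in>I. c i * Y i x)\<^sup>2) =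
      (\<Sum>i\<in>I. (c i)\<^sup>2 * expectation (\<lambda>x. (Y i x)\<^sup>2))" .
qed

lemma (in prob_space) prob_square_sum_indep_mean_zero_ge:
  fixes Y :: "'i \<Rightarrow> 'a \<Rightarrow> real"
  assumes "finite I" "indep_vars (\<lambda>_. borel) Y I"
    and "\<And>i. i \<in> I \<Longrightarrow> integrable M (\<lambda>x. (Y i x)\<^sup>2)"
    and "\<And>i. i \<in> I \<Longrightarrow> expectation (Y i) = 0"
    and second_moment_le: "\<And>i. i \<in> I \<Longrightarrow> expectation (\<lambda>x. (Y i x)\<^sup>2) \<le> v"
    and "0 < a"
  shows "prob {x \<in> space M. a \<le> (\<Sum>i\<in>I. c i * Y i x)\<^sup>2} \<le> v * (\<Sum>i\<in>I. (c i)\<^sup>2) / a"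
proof -
  have "prob {x \<in> space M. a \<le> (\<Sum>i\<in>I. c i * Y i x)\<^sup>2} \<le>
      expectation (\<lambda>x. (\<Sum>i\<in>I. c i * Y i x)\<^sup>2) / a"
    using integrable_square_sum_indep_mean_zero[OF assms(1-4)] \<open>0 < a\<close>
    by (intro integral_Markov_inequality_measure[where A="space M"]) simp_all
  also have "\<dots> = (\<Sum>i\<in>I. (c i)\<^sup>2 * expectation (\<lambda>x. (Y i x)\<^sup>2)) / a"
    by (simp add: expectation_square_sum_indep_mean_zero[OF assms(1-4)])
  also have "\<dots> \<le> (\<Sum>i\<in>I. (c i)\<^sup>2 * v) / a"
    using second_moment_le \<open>0 < a\<close> by (intro divide_right_mono sum_mono mult_left_mono) auto
  finally show ?thesis by (simp add: sum_distrib_left mult.commute)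
qed

lemma (in prob_space) prob_sum_le_below_mean_bound:
  fixes Z :: "nat \<Rightarrow> 'a \<Rightarrow> real"
  assumes indep: "indep_vars (\<lambda>_. borel) Z UNIV"
    and bounded: "\<And>i x. \<bar>Z i x\<bar> \<le> B"
    and mean: "\<And>i. expectation (Z i) = \<mu>"
    and "m < \<mu>" and "0 < n"
  shows "prob {x \<in> space M. (\<Sum>i<n. Z i x) \<le> m * n} \<le> (B + \<bar>\<mu>\<bar>)\<^sup>2 / (\<mu> - m)\<^sup>2 / n"
proof -
  have [measurable]: "random_variable borel (Z i)" for i
    using indep by (simp add: indep_vars_def)
  define V where "V i x = Z i x - \<mu>" for i x
  define v where "v = (B + \<bar>\<mu>\<bar>)\<^sup>2"
  have [measurable]: "random_variable borel (V i)" for i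
    unfolding V_def by measurable
  have V_square_le: "(V i x)\<^sup>2 \<le> v" for i x
  proof -
    have "\<bar>V i x\<bar> \<le> B + \<bar>\<mu>\<bar>"
      using bounded[of i x] unfolding V_def by linarith
    then show ?thesis
      unfolding v_def by (metis abs_ge_zero power2_abs power_mono)
  qed
  have V_indep: "indep_vars (\<lambda>_. borel) V UNIV"
    unfolding V_def by (rule indep_vars_compose2[OF indep, where Y="\<lambda>i z. z - \<mu>"]) simp
  have V_square_integrable: "integrable M (\<lambda>x. (V i x)\<^sup>2)" for i
    using V_square_le by (intro integrable_const_bound[where B=v]) auto
  have "integrable M (Z i)" for i
    using bounded by (intro integrable_const_bound[where B=B]) auto
  then have V_mean: "expectation (V i) = 0" for i
    unfolding V_def using mean prob_space by simp
  have V_second_moment: "expectation (\<lambda>x. (V i x)\<^sup>2) \<le> v" for i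
    using integral_mono[OF V_square_integrable integrable_const[of v], of i] V_square_le prob_space
    by simp
  define a where "a = ((\<mu> - m) * n)\<^sup>2"
  have "0 < a"
    unfolding a_def using \<open>m < \<mu>\<close> \<open>0 < n\<close> by simp
  have "{x \<in> space M. (\<Sum>i<n. Z i x) \<le> m * n} \<subseteq> {x \<in> space M. a \<le> (\<Sum>i<n. 1 * V i x)\<^sup>2}"
  proof safe
    fix x assume "x \<in> space M" "(\<Sum>i<n. Z i x) \<le> m * n"
    then have "(\<mu> - m) * n \<le> - (\<Sum>i<n. 1 * V i x)"
      unfolding V_def by (simp add: sum_subtractf algebra_simps)
    moreover have "0 \<le> (\<mu> - m) * n"
      using \<open>m < \<mu>\<close> by simp
    ultimately show "a \<le> (\<Sum>i<n. 1 * V i x)\<^sup>2"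
      unfolding a_def by (metis power2_minus power_mono)
  qed
  then have "prob {x \<in> space M. (\<Sum>i<n. Z i x) \<le> m * n} \<le>
      prob {x \<in> space M. a \<le> (\<Sum>i<n. 1 * V i x)\<^sup>2}"
    by (intro finite_measure_mono) measurable
  also have "\<dots> \<le> v * (\<Sum>i<n. 1\<^sup>2) / a"
    using indep_vars_subset[OF V_indep] V_square_integrable V_mean V_second_moment \<open>0 < a\<close>
    by (intro prob_square_sum_indep_mean_zero_ge) auto
  also have "\<dots> = v / (\<mu> - m)\<^sup>2 / n"
    unfolding a_def using \<open>0 < n\<close> by (simp add: power2_eq_square)
  finally show ?thesis
    unfolding v_def .
qed

lemma (in prob_space) tendsto_prob_sum_le_below_mean:
  fixes Z :: "nat \<Rightarrow> 'a \<Rightarrow> real"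
  assumes "indep_vars (\<lambda>_. borel) Z UNIV"
    and "\<And>i x. \<bar>Z i x\<bar> \<le> B"
    and "\<And>i. expectation (Z i) = \<mu>"
    and "m < \<mu>"
  shows "(\<lambda>n. prob {x \<in> space M. (\<Sum>i<n. Z i x) \<le> m * n}) \<longlonglongrightarrow> 0"
proof -
  have eventually_bound: "\<forall>\<^sub>F n in sequentially.
      prob {x \<in> space M. (\<Sum>i<n. Z i x) \<le> m * n} \<le> (B + \<bar>\<mu>\<bar>)\<^sup>2 / (\<mu> - m)\<^sup>2 / n"
    using eventually_gt_at_top[of 0] by eventually_elim (rule prob_sum_le_below_mean_bound[OF assms])
  have bound_lim: "(\<lambda>n. (B + \<bar>\<mu>\<bar>)\<^sup>2 / (\<mu> - m)\<^sup>2 / n) \<longlonglongrightarrow> 0"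
    by (intro tendsto_divide_0[OF tendsto_const] filterlim_at_top_imp_at_infinity filterlim_real_sequentially)
  show ?thesis
    by (rule tendsto_sandwich[OF always_eventually eventually_bound tendsto_const bound_lim]) simp
qed

(* The premise below_integral reads a non-integrable f as having integral infinity. *)
lemma (in finite_measure) exists_truncation_integral_gt:
  fixes f :: "'a \<Rightarrow> real"
  assumes [measurable]: "f \<in> borel_measurable M" and nonneg: "\<And>x. 0 \<le> f x"
    and below_integral: "integrable M f \<Longrightarrow> m < integral\<^sup>L M f"
  shows "\<exists>K>0. m < (\<integral>x. min (f x) K \<partial>M)"
proof (rule ccontr)
  assume no_truncation: "\<not> ?thesis"
  define I where "I k = (\<integral>x. min (f x) (real k + 1) \<partial>M)" for k :: nat
  have I_le: "I k \<le> m" for k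
    using no_truncation unfolding I_def by (metis add_nonneg_pos of_nat_0_le_iff zero_less_one not_less)
  have truncation_integrable: "integrable M (\<lambda>x. min (f x) (real k + 1))" for k
    using nonneg by (intro integrable_const_bound[where B="real k + 1"]) auto
  have "incseq I"
    unfolding I_def incseq_def by (auto intro!: integral_mono truncation_integrable)
  then have I_lim: "I \<longlonglongrightarrow> (SUP k. I k)"
    using I_le by (intro LIMSEQ_incseq_SUP bdd_aboveI) auto
  have truncation_mono: "mono (\<lambda>k. min (f x) (real k + 1))" for x
    by (intro monoI) (simp add: min.coboundedI1 min.mono)
  have truncation_lim: "(\<lambda>k. min (f x) (real k + 1)) \<longlonglongrightarrow> f x" for x
  proof (rule tendsto_eventually)
    obtain N :: nat where "f x \<le> real N"
      using real_arch_simple by blast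
    then show "\<forall>\<^sub>F k in sequentially. min (f x) (real k + 1) = f x"
      by (intro eventually_sequentiallyI[of N]) auto
  qed
  note monotone_convergence = integral_monotone_convergence_nonneg
    [OF truncation_integrable AE_I2[OF truncation_mono] AE_I2 AE_I2[OF truncation_lim]
      I_lim[unfolded I_def]]
  have "integrable M f" and "integral\<^sup>L M f = (SUP k. I k)"
    using monotone_convergence nonneg by (simp_all add: I_def)
  moreover have "(SUP k. I k) \<le> m"
    using I_le by (intro cSUP_least) auto
  ultimately show False
    using below_integral by simp
qed

lemma (in prob_space) tendsto_prob_sum_squares_le:
  fixes w :: "nat \<Rightarrow> 'a \<Rightarrow> real"
  assumes indep: "indep_vars (\<lambda>_. borel) w UNIV"
    and distr_w: "\<And>i. distr M borel (w i) = P"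
    and below_second_moment: "integrable P (\<lambda>y. y\<^sup>2) \<Longrightarrow> m < (\<integral>y. y\<^sup>2 \<partial>P)"
  shows "(\<lambda>n. prob {x \<in> space M. (\<Sum>i<n. (w i x)\<^sup>2) \<le> m * n}) \<longlonglongrightarrow> 0"
proof -
  have [measurable]: "random_variable borel (w i)" for i
    using indep by (simp add: indep_vars_def)
  interpret P: prob_space P
    using prob_space_distr[of "w 0" borel] distr_w by simp
  have "sets P = sets borel"
    using distr_w[of 0] by (metis sets_distr)
  then have "(\<lambda>y. y\<^sup>2) \<in> borel_measurable P"
    unfolding measurable_cong_sets[OF _ refl] by simp
  then obtain K where "0 < K" and K: "m < (\<integral>y. min (y\<^sup>2) K \<partial>P)"
    using P.exists_truncation_integral_gt[OF _ zero_le_power2 below_second_moment] by blast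
  define Z where "Z i x = min ((w i x)\<^sup>2) K" for i x
  have Z_lim: "(\<lambda>n. prob {x \<in> space M. (\<Sum>i<n. Z i x) \<le> m * n}) \<longlonglongrightarrow> 0"
  proof (rule tendsto_prob_sum_le_below_mean[where B=K])
    show "indep_vars (\<lambda>_. borel) Z UNIV"
      unfolding Z_def by (rule indep_vars_compose2[OF indep, where Y="\<lambda>i y. min (y\<^sup>2) K"]) simp
    show "\<bar>Z i x\<bar> \<le> K" for i x
      unfolding Z_def using \<open>0 < K\<close> by simp
    show "expectation (Z i) = (\<integral>y. min (y\<^sup>2) K \<partial>P)" for i
      unfolding Z_def using integral_distr[of "w i" M borel "\<lambda>y. min (y\<^sup>2) K"] distr_w[of i] by simp
  qed (use K in simp)
  have dominated: "prob {x \<in> space M. (\<Sum>i<n. (w i x)\<^sup>2) \<le> m * n} \<le>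
      prob {x \<in> space M. (\<Sum>i<n. Z i x) \<le> m * n}" for n
  proof (rule finite_measure_mono)
    have "(\<Sum>i<n. Z i x) \<le> (\<Sum>i<n. (w i x)\<^sup>2)" for x
      unfolding Z_def by (intro sum_mono) simp
    then show "{x \<in> space M. (\<Sum>i<n. (w i x)\<^sup>2) \<le> m * n} \<subseteq> {x \<in> space M. (\<Sum>i<n. Z i x) \<le> m * n}"
      by (blast intro: order_trans)
  qed (unfold Z_def, measurable)
  show ?thesis
    by (rule tendsto_sandwich[OF _ always_eventually tendsto_const Z_lim]) (simp_all add: dominated)
qed

lemma (in prob_space) prob_square_weighted_sum_iid_ge:
  fixes w :: "nat \<Rightarrow> 'a \<Rightarrow> real"
  assumes indep: "indep_vars (\<lambda>_. borel) w UNIV"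
    and distr_w: "\<And>i. distr M borel (w i) = P"
    and mean_zero: "(\<integral>y. y \<partial>P) = 0"
    and square_integrable: "integrable P (\<lambda>y. y\<^sup>2)"
    and "0 < a"
  shows "prob {x \<in> space M. a \<le> (\<Sum>i<n. c i * w i x)\<^sup>2} \<le> (\<integral>y. y\<^sup>2 \<partial>P) * (\<Sum>i<n. (c i)\<^sup>2) / a"
proof -
  have [measurable]: "random_variable borel (w i)" for i
    using indep by (simp add: indep_vars_def)
  have "integrable M (\<lambda>x. (w i x)\<^sup>2)" for i
    using integrable_distr_eq[of "w i" M borel "\<lambda>y. y\<^sup>2"] distr_w[of i] square_integrable by simp
  moreover have "expectation (w i) = 0" for i
  proof -
    have "expectation (w i) = (\<integral>y. y \<partial>distr M borel (w i))"
      by (rule integral_distr[symmetric]) simp_all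
    then show ?thesis
      using distr_w mean_zero by simp
  qed
  moreover have "expectation (\<lambda>x. (w i x)\<^sup>2) = (\<integral>y. y\<^sup>2 \<partial>P)" for i
    using integral_distr[of "w i" M borel "\<lambda>y. y\<^sup>2"] distr_w[of i] by simp
  ultimately show ?thesis
    using indep_vars_subset[OF indep] \<open>0 < a\<close> by (intro prob_square_sum_indep_mean_zero_ge) auto
qed

lemma abs_gt_if_ratio_gt:
  fixes b S T \<delta> :: real
  assumes "0 \<le> \<delta>" "b \<noteq> 0" "0 < S" and ratio: "b * S = 0 \<or> \<bar>T\<bar> / (b * S) > \<delta>"
  shows "\<delta> * \<bar>b\<bar> * S < \<bar>T\<bar>"
proof -
  have "\<delta> < \<bar>T\<bar> / (b * S)"
    using ratio assms by auto
  moreover from this have "0 < b * S"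
    using \<open>0 \<le> \<delta>\<close> by (smt (verit) divide_nonneg_nonpos abs_ge_zero)
  ultimately show ?thesis
    using \<open>0 < S\<close> by (simp add: less_divide_eq abs_mult zero_less_mult_iff)
qed

lemma (in prob_space) tendsto_prob_ratio_gt_finite_second_moment:
  fixes w :: "nat \<Rightarrow> 'a \<Rightarrow> real" and g :: "nat \<Rightarrow> nat \<Rightarrow> real" and b :: "nat \<Rightarrow> real" and C :: real
  assumes indep: "indep_vars (\<lambda>_. borel) w UNIV"
    and distr_w: "\<And>i. distr M borel (w i) = P"
    and mean_zero: "(\<integral>y. y \<partial>P) = 0"
    and square_integrable: "integrable P (\<lambda>y. y\<^sup>2)"
    and second_moment_pos: "0 < (\<integral>y. y\<^sup>2 \<partial>P)"
    and weights: "\<forall>\<^sub>F n in sequentially. b n \<noteq> 0 \<and> (\<Sum>i<n. (g n i)\<^sup>2) \<le> C * n * (b n)\<^sup>2"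
    and "0 < \<delta>"
  shows "(\<lambda>n. prob {x \<in> space M.
            b n * (\<Sum>i<n. (w i x)\<^sup>2) = 0 \<or>
            \<bar>\<Sum>i<n. w i x * g n i\<bar> / (b n * (\<Sum>i<n. (w i x)\<^sup>2)) > \<delta>})
         \<longlonglongrightarrow> 0"
proof -
  have [measurable]: "random_variable borel (w i)" for i
    using indep by (simp add: indep_vars_def)
  define \<sigma>2 where "\<sigma>2 = (\<integral>y. y\<^sup>2 \<partial>P)"
  define m where "m = \<sigma>2 / 2"
  have "0 < m"
    using second_moment_pos unfolding m_def \<sigma>2_def by simp
  define A where "A n = {x \<in> space M. (\<Sum>i<n. (w i x)\<^sup>2) \<le> m * n}" for n
  define E where "E n = {x \<in> space M.
            b n * (\<Sum>i<n. (w i x)\<^sup>2) = 0 \<or>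
            \<bar>\<Sum>i<n. w i x * g n i\<bar> / (b n * (\<Sum>i<n. (w i x)\<^sup>2)) > \<delta>}" for n
  have A_lim: "(\<lambda>n. prob (A n)) \<longlonglongrightarrow> 0"
    unfolding A_def using second_moment_pos
    by (intro tendsto_prob_sum_squares_le[OF indep distr_w]) (simp add: m_def \<sigma>2_def)
  have bound: "prob (E n) \<le> prob (A n) + \<sigma>2 * C / (\<delta> * m)\<^sup>2 / n"
    if "0 < n" "b n \<noteq> 0" and g_le: "(\<Sum>i<n. (g n i)\<^sup>2) \<le> C * n * (b n)\<^sup>2" for n
  proof -
    define a where "a = (\<delta> * b n * m * n)\<^sup>2"
    have "0 < a"
      unfolding a_def using that \<open>0 < m\<close> \<open>0 < \<delta>\<close> by simp
    define B where "B = {x \<in> space M. a \<le> (\<Sum>i<n. g n i * w i x)\<^sup>2}"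
    have E_subset: "E n \<subseteq> A n \<union> B"
    proof
      fix x assume "x \<in> E n"
      define S where "S = (\<Sum>i<n. (w i x)\<^sup>2)"
      show "x \<in> A n \<union> B"
      proof (cases "x \<in> A n")
        case False
        then have "m * n < S"
          using \<open>x \<in> E n\<close> unfolding A_def E_def S_def by auto
        moreover have "0 < m * n"
          using \<open>0 < m\<close> that by simp
        ultimately have "\<bar>\<delta> * b n * m * n\<bar> < \<delta> * \<bar>b n\<bar> * S"
          using \<open>0 < \<delta>\<close> \<open>b n \<noteq> 0\<close> by (simp add: abs_mult)
        also have "\<dots> < \<bar>\<Sum>i<n. g n i * w i x\<bar>"
          using \<open>x \<in> E n\<close> \<open>m * n < S\<close> \<open>0 < m * n\<close> \<open>b n \<noteq> 0\<close> \<open>0 < \<delta>\<close>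
          by (intro abs_gt_if_ratio_gt) (auto simp: E_def S_def mult.commute)
        finally have "a \<le> (\<Sum>i<n. g n i * w i x)\<^sup>2"
          unfolding a_def by (metis abs_le_square_iff less_imp_le)
        then show ?thesis
          using \<open>x \<in> E n\<close> unfolding B_def E_def by simp
      qed simp
    qed
    have "prob (E n) \<le> prob (A n \<union> B)"
      using E_subset by (rule finite_measure_mono) (unfold A_def B_def, measurable)
    also have "\<dots> \<le> prob (A n) + prob B"
      by (intro measure_Un_le) (simp_all add: A_def B_def)
    also have "prob B \<le> \<sigma>2 * (\<Sum>i<n. (g n i)\<^sup>2) / a"
      unfolding B_def \<sigma>2_def
      by (rule prob_square_weighted_sum_iid_ge[OF indep distr_w mean_zero square_integrable \<open>0 < a\<close>])
    also have "\<dots> \<le> \<sigma>2 * (C * n * (b n)\<^sup>2) / a"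
      using g_le second_moment_pos \<open>0 < a\<close> unfolding \<sigma>2_def
      by (intro divide_right_mono mult_left_mono) auto
    also have "\<dots> = \<sigma>2 * C / (\<delta> * m)\<^sup>2 / n"
      unfolding a_def using that \<open>0 < m\<close> \<open>0 < \<delta>\<close> by (simp add: field_simps power2_eq_square)
    finally show ?thesis
      by simp
  qed
  have eventually_bound: "\<forall>\<^sub>F n in sequentially. prob (E n) \<le> prob (A n) + \<sigma>2 * C / (\<delta> * m)\<^sup>2 / n"
    using weights eventually_gt_at_top[of 0] by eventually_elim (use bound in auto)
  have "(\<lambda>n. prob (A n) + \<sigma>2 * C / (\<delta> * m)\<^sup>2 / n) \<longlonglongrightarrow> 0 + 0"
    by (intro tendsto_add A_lim tendsto_divide_0[OF tendsto_const]
        filterlim_at_top_imp_at_infinity filterlim_real_sequentially)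
  then have bound_lim: "(\<lambda>n. prob (A n) + \<sigma>2 * C / (\<delta> * m)\<^sup>2 / n) \<longlonglongrightarrow> 0"
    by simp
  show ?thesis
    using tendsto_sandwich[OF always_eventually eventually_bound tendsto_const bound_lim]
    unfolding E_def by simp
qed

lemma sum_squares_less_if_ratio_gt:
  fixes w g :: "nat \<Rightarrow> real" and b K \<delta> :: real
  assumes "0 < \<delta>" "b \<noteq> 0" and g_le: "(\<Sum>i<n. (g i)\<^sup>2) \<le> K * b\<^sup>2"
    and "0 < (\<Sum>i<n. (w i)\<^sup>2)"
    and "b * (\<Sum>i<n. (w i)\<^sup>2) = 0 \<or> \<bar>\<Sum>i<n. w i * g i\<bar> / (b * (\<Sum>i<n. (w i)\<^sup>2)) > \<delta>"
  shows "(\<Sum>i<n. (w i)\<^sup>2) < K / \<delta>\<^sup>2"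
proof -
  define S where "S = (\<Sum>i<n. (w i)\<^sup>2)"
  define T where "T = (\<Sum>i<n. w i * g i)"
  have "0 < S"
    using assms unfolding S_def by simp
  have "\<delta> * \<bar>b\<bar> * S < \<bar>T\<bar>"
    using assms unfolding S_def T_def by (intro abs_gt_if_ratio_gt) auto
  then have "\<bar>\<delta> * b * S\<bar> < \<bar>T\<bar>"
    using \<open>0 < S\<close> \<open>0 < \<delta>\<close> by (simp add: abs_mult)
  then have "(\<delta> * b * S)\<^sup>2 < T\<^sup>2"
    by (metis abs_le_square_iff not_le)
  also have "T\<^sup>2 \<le> S * (\<Sum>i<n. (g i)\<^sup>2)"
    unfolding S_def T_def by (rule Cauchy_Schwarz_ineq_sum)
  also have "\<dots> \<le> S * (K * b\<^sup>2)"
    using g_le \<open>0 < S\<close> by simp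
  finally have "(S * b\<^sup>2) * (\<delta>\<^sup>2 * S) < (S * b\<^sup>2) * K"
    by (simp add: power_mult_distrib power2_eq_square mult_ac)
  then have "\<delta>\<^sup>2 * S < K"
    using \<open>0 < S\<close> \<open>b \<noteq> 0\<close> by (simp add: mult_less_cancel_left_pos)
  then show ?thesis
    unfolding S_def using \<open>0 < \<delta>\<close> by (simp add: field_simps)
qed

lemma (in prob_space) tendsto_prob_ratio_gt_infinite_second_moment:
  fixes w :: "nat \<Rightarrow> 'a \<Rightarrow> real" and g :: "nat \<Rightarrow> nat \<Rightarrow> real" and b :: "nat \<Rightarrow> real" and C :: real
  assumes indep: "indep_vars (\<lambda>_. borel) w UNIV"
    and distr_w: "\<And>i. distr M borel (w i) = P"
    and not_square_integrable: "\<not> integrable P (\<lambda>y. y\<^sup>2)"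
    and "0 \<le> C"
    and weights: "\<forall>\<^sub>F n in sequentially. b n \<noteq> 0 \<and> (\<Sum>i<n. (g n i)\<^sup>2) \<le> C * n * (b n)\<^sup>2"
    and "0 < \<delta>"
  shows "(\<lambda>n. prob {x \<in> space M.
            b n * (\<Sum>i<n. (w i x)\<^sup>2) = 0 \<or>
            \<bar>\<Sum>i<n. w i x * g n i\<bar> / (b n * (\<Sum>i<n. (w i x)\<^sup>2)) > \<delta>})
         \<longlonglongrightarrow> 0"
proof -
  have [measurable]: "random_variable borel (w i)" for i
    using indep by (simp add: indep_vars_def)
  define m where "m = C / \<delta>\<^sup>2"
  define A where "A n = {x \<in> space M. (\<Sum>i<n. (w i x)\<^sup>2) \<le> m * n}" for n
  define E where "E n = {x \<in> space M.
            b n * (\<Sum>i<n. (w i x)\<^sup>2) = 0 \<or>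
            \<bar>\<Sum>i<n. w i x * g n i\<bar> / (b n * (\<Sum>i<n. (w i x)\<^sup>2)) > \<delta>}" for n
  have A_lim: "(\<lambda>n. prob (A n)) \<longlonglongrightarrow> 0"
    unfolding A_def using not_square_integrable by (intro tendsto_prob_sum_squares_le[OF indep distr_w]) simp
  have E_subset: "E n \<subseteq> A n"
    if "b n \<noteq> 0" and g_le: "(\<Sum>i<n. (g n i)\<^sup>2) \<le> C * n * (b n)\<^sup>2" for n
  proof
    fix x assume "x \<in> E n"
    show "x \<in> A n"
    proof (cases "(\<Sum>i<n. (w i x)\<^sup>2) = 0")
      case True
      then show ?thesis
        using \<open>x \<in> E n\<close> \<open>0 \<le> C\<close> unfolding A_def E_def m_def by simp
    next
      case False
      then have "0 < (\<Sum>i<n. (w i x)\<^sup>2)"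
        by (simp add: order_less_le sum_nonneg)
      then have "(\<Sum>i<n. (w i x)\<^sup>2) < C * n / \<delta>\<^sup>2"
        using \<open>x \<in> E n\<close> unfolding E_def
        by (intro sum_squares_less_if_ratio_gt[OF \<open>0 < \<delta>\<close> \<open>b n \<noteq> 0\<close> g_le]) auto
      then show ?thesis
        using \<open>x \<in> E n\<close> unfolding A_def E_def m_def by simp
    qed
  qed
  have "\<forall>\<^sub>F n in sequentially. prob (E n) \<le> prob (A n)"
    using weights by eventually_elim (use E_subset in \<open>auto intro!: finite_measure_mono simp: A_def\<close>)
  from tendsto_sandwich[OF always_eventually this tendsto_const A_lim] show ?thesis
    unfolding E_def by simp
qed

lemma eventually_le_linear_mult_square:
  fixes r b :: "nat \<Rightarrow> real" and \<alpha> \<beta> :: real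
  assumes exponents: "\<alpha> + 2 * \<beta> = 1"
    and r_bound: "\<exists>C. \<forall>\<^sub>F n in sequentially. \<bar>r n\<bar> \<le> C * \<bar>real n powr \<alpha>\<bar>"
    and b_bound: "\<exists>C>0. \<forall>\<^sub>F n in sequentially. \<bar>real n powr (- \<beta>)\<bar> \<le> C * \<bar>b n\<bar>"
  shows "\<exists>C :: real \<ge> 0. \<forall>\<^sub>F n in sequentially. b n \<noteq> 0 \<and> r n \<le> C * n * (b n)\<^sup>2"
proof -
  obtain Cr where Cr: "\<forall>\<^sub>F n in sequentially. \<bar>r n\<bar> \<le> Cr * \<bar>real n powr \<alpha>\<bar>"
    using r_bound by blast
  obtain Cb where Cb: "\<forall>\<^sub>F n in sequentially. \<bar>real n powr (- \<beta>)\<bar> \<le> Cb * \<bar>b n\<bar>"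
    using b_bound by blast
  have "\<forall>\<^sub>F n in sequentially. b n \<noteq> 0 \<and> r n \<le> (max Cr 0 * Cb\<^sup>2) * n * (b n)\<^sup>2"
    using Cr Cb eventually_ge_at_top[of 1]
  proof eventually_elim
    case (elim n)
    then have "0 < real n"
      by simp
    then have "0 < real n powr (- \<beta>)"
      by simp
    then have "0 < Cb * \<bar>b n\<bar>"
      using elim(2) by linarith
    then have "b n \<noteq> 0"
      by auto
    have "r n \<le> Cr * real n powr \<alpha>"
      using elim(1) by simp
    also have "\<dots> \<le> max Cr 0 * real n powr \<alpha>"
      by (intro mult_right_mono) auto
    also have "real n powr \<alpha> = real n * (real n powr (- \<beta>))\<^sup>2"
    proof -
      have "real n * (real n powr (- \<beta>))\<^sup>2 = real n powr 1 * (real n powr (- \<beta>) * real n powr (- \<beta>))"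
        using \<open>0 < real n\<close> by (simp add: power2_eq_square)
      also have "\<dots> = real n powr (1 + (- \<beta> + - \<beta>))"
        by (simp only: powr_add)
      also have "1 + (- \<beta> + - \<beta>) = \<alpha>"
        using exponents by simp
      finally show ?thesis ..
    qed
    also have "max Cr 0 * \<dots> \<le> max Cr 0 * (real n * (Cb * \<bar>b n\<bar>)\<^sup>2)"
      using elim(2) \<open>0 < real n powr (- \<beta>)\<close> \<open>0 < real n\<close>
      by (intro mult_left_mono power_mono) auto
    also have "\<dots> = (max Cr 0 * Cb\<^sup>2) * n * (b n)\<^sup>2"
      by (simp add: power_mult_distrib)
    finally show ?case
      using \<open>b n \<noteq> 0\<close> by simp
  qed
  then show ?thesis
    by (intro exI[of _ "max Cr 0 * Cb\<^sup>2"]) simp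
qed

lemma distr_class_second_moment_pos:
  assumes "distr_class s P" and square_integrable: "integrable P (\<lambda>y. y\<^sup>2)"
  shows "0 < (\<integral>y. y\<^sup>2 \<partial>P)"
proof -
  have "(\<integral>y. y\<^sup>2 \<partial>P) \<noteq> 0"
  proof
    assume "(\<integral>y. y\<^sup>2 \<partial>P) = 0"
    then have "AE y in P. y\<^sup>2 = 0"
      using integral_nonneg_eq_0_iff_AE[OF square_integrable] by simp
    then have "AE y in P. \<bar>y\<bar> powr s = 0"
      by (rule AE_mp) simp
    then have "(\<integral>y. \<bar>y\<bar> powr s \<partial>P) = 0"
      by (rule integral_eq_zero_AE)
    then show False
      using \<open>distr_class s P\<close> unfolding distr_class_def by simp
  qed
  then show ?thesis
    by (simp add: order_less_le)
qed

theorem lemmaA4: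
  fixes M :: "'a measure" and P :: "real measure"
    and w :: "nat \<Rightarrow> 'a \<Rightarrow> real"
    and g :: "nat \<Rightarrow> nat \<Rightarrow> real"
    and b :: "nat \<Rightarrow> real"
    and t \<delta> :: real
  assumes "prob_space M"
    and "0 \<le> t" "t \<le> 1"
    and g_bound: "\<exists>C. \<forall>\<^sub>F n in sequentially.
                   \<bar>\<Sum>i<n. (g n i)\<^sup>2\<bar> \<le> C * \<bar>real n powr ((1 - t) / (1 + t))\<bar>"
    and b_bound: "\<exists>C>0. \<forall>\<^sub>F n in sequentially.
                   \<bar>real n powr (- t / (1 + t))\<bar> \<le> C * \<bar>b n\<bar>"
    and meas: "\<And>i. w i \<in> borel_measurable M"
    and indep: "prob_space.indep_vars M (\<lambda>_. borel) w UNIV"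
    and ident: "\<And>i. distr M borel (w i) = P"
    and classP: "distr_class 1 P \<or> distr_class 2 P"
    and "\<delta> > 0"
  shows "(\<lambda>n. measure M {x \<in> space M.
            b n * (\<Sum>i<n. (w i x)\<^sup>2) = 0 \<or>
            \<bar>\<Sum>i<n. w i x * g n i\<bar> / (b n * (\<Sum>i<n. (w i x)\<^sup>2)) > \<delta>})
         \<longlonglongrightarrow> 0"
proof -
  interpret prob_space M by fact
  have exponents: "(1 - t) / (1 + t) + 2 * (t / (1 + t)) = 1"
    using \<open>0 \<le> t\<close> by (auto simp: divide_simps)
  obtain C :: real where "0 \<le> C" and weights:
      "\<forall>\<^sub>F n in sequentially. b n \<noteq> 0 \<and> (\<Sum>i<n. (g n i)\<^sup>2) \<le> C * n * (b n)\<^sup>2"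
    using eventually_le_linear_mult_square[OF exponents g_bound] b_bound by auto
  from classP obtain s where "distr_class s P"
    by blast
  show ?thesis
  proof (cases "integrable P (\<lambda>y. y\<^sup>2)")
    case True
    with \<open>distr_class s P\<close> show ?thesis
      by (intro tendsto_prob_ratio_gt_finite_second_moment[OF indep ident _ True _ weights \<open>0 < \<delta>\<close>]
          distr_class_second_moment_pos) (auto simp: distr_class_def)
  next
    case False
    then show ?thesis
      by (rule tendsto_prob_ratio_gt_infinite_second_moment[OF indep ident _ \<open>0 \<le> C\<close> weights \<open>0 < \<delta>\<close>])
  qed
qed

end
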